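(* Let $G$ be a finite simple graph, $s\geq1$, and $e_1,\dots,e_s$ edges of $G$ (repetitions allowed). If $u$ and $v$ are vertices of $G$ (possibly $u=v$) that are even-connected with respect to $e_1\cdots e_s$, then $uv\in(I(G)^{s+1}:e_1\cdots e_s)$.
   Context: $S=K[\,x : x\in V(G)\,]$, $I(G)=(xy : xy\text{ an edge of } G)$, edges identified with degree-2 monomials, $(J:m)=\{f\in S: fm\in J\}$. Even-connection: vertices $u,v$ (possibly equal) are even-connected with respect to the sequence $e_1,\dots,e_s$ if there is a sequence of vertices $p_0,p_1,\dots,p_{2k+1}$ with $k\geq1$ (vertices may repeat) such that (1) $p_0=u$, $p_{2k+1}=v$; (2) for all $0\leq l\leq k-1$, $p_{2l+1}p_{2l+2}=e_i$ for some $i$; (3) for every $i$, $|\{l\geq0 : p_{2l+1}p_{2l+2}=e_i\}|\leq|\{j : e_j=e_i\}|$; (4) for all $0\leq r\leq 2k$, $p_rp_{r+1}$ is an edge of $G$. *)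

theory Defs
  imports Main "HOL-Library.Poly_Mapping"
begin

text \<open>Polynomial ring K[x : x in V], V = UNIV of a finite type 'v:
  polynomials are finitely supported maps from monomials (exponent vectors
  'v =>0 nat) to coefficients in the field 'k.\<close>

type_synonym ('v, 'k) mpoly = "('v \<Rightarrow>\<^sub>0 nat) \<Rightarrow>\<^sub>0 'k"

definition Var :: "'v \<Rightarrow> ('v, 'k::field) mpoly" where
  "Var x = Poly_Mapping.single (Poly_Mapping.single x 1) 1"

definition simple_graph :: "'v set set \<Rightarrow> bool" where
  "simple_graph E \<longleftrightarrow> (\<forall>e\<in>E. \<exists>x y. x \<noteq> y \<and> e = {x, y})"

definition edge_mon :: "'v set \<Rightarrow> ('v, 'k::field) mpoly" where
  "edge_mon e = (\<Prod>x\<in>e. Var x)"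

definition ideal_gen :: "'a::comm_ring_1 set \<Rightarrow> 'a set" where
  "ideal_gen A = {(\<Sum>a\<in>F. c a * a) | F c. finite F \<and> F \<subseteq> A}"

definition ideal_prod :: "'a::comm_ring_1 set \<Rightarrow> 'a set \<Rightarrow> 'a set" where
  "ideal_prod I J = ideal_gen {a * b | a b. a \<in> I \<and> b \<in> J}"

fun ideal_pow :: "'a::comm_ring_1 set \<Rightarrow> nat \<Rightarrow> 'a set" where
  "ideal_pow I 0 = UNIV"
| "ideal_pow I (Suc n) = ideal_prod (ideal_pow I n) I"

definition colon_ideal :: "'a::comm_ring_1 set \<Rightarrow> 'a \<Rightarrow> 'a set" where
  "colon_ideal J m = {f. f * m \<in> J}"

definition edge_ideal :: "'v set set \<Rightarrow> ('v, 'k::field) mpoly set" where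
  "edge_ideal E = ideal_gen (edge_mon ` E)"

definition even_connected :: "'v set set \<Rightarrow> 'v set list \<Rightarrow> 'v \<Rightarrow> 'v \<Rightarrow> bool" where
  "even_connected E es u v \<longleftrightarrow>
     (\<exists>(p :: nat \<Rightarrow> 'v) k. k \<ge> 1 \<and> p 0 = u \<and> p (2*k+1) = v \<and>
        (\<forall>l<k. {p (2*l+1), p (2*l+2)} \<in> set es) \<and>
        (\<forall>e \<in> set es. card {l. l < k \<and> {p (2*l+1), p (2*l+2)} = e} \<le> count_list es e) \<and>
        (\<forall>r\<le>2*k. {p r, p (r+1)} \<in> E))"

end

theory Submission
  imports Defs "HOL-Library.Multiset"
begin

text \<open>
  Write the walk as \<open>u = p(0), p(1), \<dots>, p(2k+1) = v\<close>. Its odd edges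
  \<open>p(2l+1) p(2l+2)\<close> form a sub-multiset of \<open>e\<^sub>1, \<dots>, e\<^sub>s\<close>, and \<open>u v\<close> times their
  product is the product of the \<open>k + 1\<close> even edges \<open>p(2r) p(2r+1)\<close>. So \<open>u v e\<^sub>1 \<cdots> e\<^sub>s\<close>
  arises from \<open>e\<^sub>1 \<cdots> e\<^sub>s\<close> by exchanging \<open>k\<close> factors for \<open>k + 1\<close> edges of \<open>G\<close>: it is a
  product of \<open>s + 1\<close> edges and lies in \<open>I(G)\<^sup>s\<^sup>+\<^sup>1\<close>.
\<close>

lemma ideal_gen_mem:
  assumes "a \<in> A"
  shows "a \<in> ideal_gen A"
  unfolding ideal_gen_def
  by (rule CollectI, rule exI[of _ "{a}"], rule exI[of _ "\<lambda>_. 1"]) (use assms in auto)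

lemma ideal_prod_mult_mem:
  assumes "a \<in> I" and "b \<in> J"
  shows "a * b \<in> ideal_prod I J"
  unfolding ideal_prod_def using assms by (blast intro: ideal_gen_mem)

lemma edge_mon_mem_edge_ideal:
  assumes "e \<in> E"
  shows "edge_mon e \<in> edge_ideal E"
  unfolding edge_ideal_def using assms by (blast intro: ideal_gen_mem)

lemma prod_edge_mons_mem_edge_ideal_pow:
  fixes N :: "'v set multiset"
  assumes "set_mset N \<subseteq> E"
  shows "(\<Prod>e\<in>#N. edge_mon e :: ('v, 'k::field) mpoly) \<in> ideal_pow (edge_ideal E) (size N)"
  using assms
proof (induction N)
  case empty
  then show ?case by simp
next
  case (add e N)
  then have "(\<Prod>e\<in>#N. edge_mon e :: ('v, 'k) mpoly) * edge_mon e
      \<in> ideal_prod (ideal_pow (edge_ideal E) (size N)) (edge_ideal E)"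
    by (auto intro: ideal_prod_mult_mem edge_mon_mem_edge_ideal)
  then show ?case by (simp add: mult.commute)
qed

lemma simple_graph_edge_neq:
  assumes "simple_graph E" and "{x, y} \<in> E"
  shows "x \<noteq> y"
  using assms unfolding simple_graph_def by (metis doubleton_eq_iff)

lemma edge_mon_doubleton:
  assumes "x \<noteq> y"
  shows "(edge_mon {x, y} :: ('v, 'k::field) mpoly) = Var x * Var y"
  using assms by (simp add: edge_mon_def)

lemma prod_walk_odd_even:
  fixes g :: "nat \<Rightarrow> 'a::comm_monoid_mult"
  shows "g 0 * g (2*k+1) * (\<Prod>l<k. g (2*l+1) * g (2*l+2)) = (\<Prod>r\<le>k. g (2*r) * g (2*r+1))"
proof (induction k)
  case 0
  then show ?case by simp
next
  case (Suc k)
  have "g 0 * g (2 * Suc k + 1) * (\<Prod>l<Suc k. g (2*l+1) * g (2*l+2))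
      = (g 0 * g (2*k+1) * (\<Prod>l<k. g (2*l+1) * g (2*l+2))) * (g (2 * Suc k) * g (2 * Suc k + 1))"
    by (simp add: ac_simps)
  also have "\<dots> = (\<Prod>r\<le>Suc k. g (2*r) * g (2*r+1))"
    by (simp only: Suc.IH prod.atMost_Suc)
  finally show ?case .
qed

lemma walk_edge_mon_odd_even:
  fixes p :: "nat \<Rightarrow> 'v"
  assumes "simple_graph E" and walk: "\<forall>r\<le>2*k. {p r, p (r+1)} \<in> E"
  shows "Var (p 0) * Var (p (2*k+1)) * (\<Prod>l<k. edge_mon {p (2*l+1), p (2*l+2)})
       = (\<Prod>r\<le>k. edge_mon {p (2*r), p (2*r+1)} :: ('v, 'k::field) mpoly)"
proof -
  have edge_mon_step: "edge_mon {p r, p (r+1)} = (Var (p r) * Var (p (r+1)) :: ('v, 'k) mpoly)"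
    if "r \<le> 2*k" for r
    using that walk simple_graph_edge_neq[OF \<open>simple_graph E\<close>] by (simp add: edge_mon_doubleton)
  have "(\<Prod>l<k. edge_mon {p (2*l+1), p (2*l+2)}) = (\<Prod>l<k. Var (p (2*l+1)) * Var (p (2*l+2)) :: ('v, 'k) mpoly)"
    using edge_mon_step[of "2*_+1"] by (intro prod.cong) (auto simp: numeral_2_eq_2)
  moreover have "(\<Prod>r\<le>k. edge_mon {p (2*r), p (2*r+1)}) = (\<Prod>r\<le>k. Var (p (2*r)) * Var (p (2*r+1)) :: ('v, 'k) mpoly)"
    using edge_mon_step[of "2*_"] by (intro prod.cong) auto
  ultimately show ?thesis
    using prod_walk_odd_even[of "\<lambda>r. Var (p r) :: ('v, 'k) mpoly" k] by simp
qed

lemma image_mset_mset_set_subseteq: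
  assumes "finite A" and "f ` A \<subseteq> set_mset B"
    and "\<forall>b\<in>#B. card {a\<in>A. f a = b} \<le> count B b"
  shows "image_mset f (mset_set A) \<subseteq># B"
proof (rule mset_subset_eqI)
  fix b
  have "count (image_mset f (mset_set A)) b = card {a\<in>A. f a = b}"
    using \<open>finite A\<close> by (simp add: count_image_mset Int_def conj_commute)
  then show "count (image_mset f (mset_set A)) b \<le> count B b"
  proof (cases "b \<in># B")
    case False
    with assms(2) have "{a\<in>A. f a = b} = {}" by blast
    then show ?thesis using \<open>count _ b = _\<close> by (metis card.empty zero_le)
  qed (use assms(3) \<open>count _ b = _\<close> in simp)
qed

lemma colon_edge_ideal_pow_exchange:
  assumes "set es \<subseteq> E" and "M \<subseteq># mset es"
    and "set_mset N \<subseteq> E" and "size N = size M + 1"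
    and "m * (\<Prod>e\<in>#M. edge_mon e) = (\<Prod>e\<in>#N. edge_mon e :: ('v, 'k::field) mpoly)"
  shows "m \<in> colon_ideal (ideal_pow (edge_ideal E) (length es + 1)) (prod_list (map edge_mon es))"
proof -
  define R where "R = mset es - M"
  have es: "mset es = M + R"
    using \<open>M \<subseteq># mset es\<close> by (simp add: R_def)
  have "m * prod_list (map edge_mon es) = m * (\<Prod>e\<in>#M + R. edge_mon e)"
    by (simp flip: es prod_mset_prod_list)
  also have "\<dots> = (\<Prod>e\<in>#N + R. edge_mon e)"
    by (simp add: mult.assoc flip: assms(5))
  finally have "m * prod_list (map edge_mon es) = (\<Prod>e\<in>#N + R. edge_mon e)" .
  moreover have "set_mset (N + R) \<subseteq> E"
    using assms(1,3) by (auto simp: R_def dest!: in_diffD)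
  moreover have "size (N + R) = length es + 1"
    using arg_cong[OF es, of size] assms(4) by simp
  ultimately show ?thesis
    unfolding colon_ideal_def using prod_edge_mons_mem_edge_ideal_pow[of "N + R" E] by simp
qed

theorem theorem6p5:
  fixes E :: "('v::finite) set set" and es :: "'v set list" and u v :: 'v
  assumes "simple_graph E"
    and "length es \<ge> 1"
    and "set es \<subseteq> E"
    and "even_connected E es u v"
  shows "(Var u * Var v :: ('v, 'k::field) mpoly)
           \<in> colon_ideal (ideal_pow (edge_ideal E) (length es + 1))
                         (prod_list (map edge_mon es))"
proof -
  obtain p :: "nat \<Rightarrow> 'v" and k :: nat where "p 0 = u" and "p (2*k+1) = v"
    and odd_in_es: "\<forall>l<k. {p (2*l+1), p (2*l+2)} \<in> set es"
    and odd_count: "\<forall>e\<in>set es. card {l. l < k \<and> {p (2*l+1), p (2*l+2)} = e} \<le> count_list es e"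
    and walk: "\<forall>r\<le>2*k. {p r, p (r+1)} \<in> E"
    using assms(4) unfolding even_connected_def by blast
  define odd_edges where "odd_edges = image_mset (\<lambda>l. {p (2*l+1), p (2*l+2)}) (mset_set {..<k})"
  define even_edges where "even_edges = image_mset (\<lambda>r. {p (2*r), p (2*r+1)}) (mset_set {..k})"
  have "odd_edges \<subseteq># mset es"
    unfolding odd_edges_def using odd_in_es odd_count
    by (intro image_mset_mset_set_subseteq) (auto simp: count_mset)
  moreover have "set_mset even_edges \<subseteq> E"
    unfolding even_edges_def using walk by auto
  moreover have "size even_edges = size odd_edges + 1"
    by (simp add: odd_edges_def even_edges_def)
  moreover have "Var u * Var v * (\<Prod>e\<in>#odd_edges. edge_mon e) = (\<Prod>e\<in>#even_edges. edge_mon e :: ('v, 'k) mpoly)"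
    using walk_edge_mon_odd_even[OF assms(1) walk] \<open>p 0 = u\<close> \<open>p (2*k+1) = v\<close>
    by (simp add: odd_edges_def even_edges_def prod_unfold_prod_mset image_mset.compositionality comp_def)
  ultimately show ?thesis
    using colon_edge_ideal_pow_exchange[OF assms(3)] by blast
qed

end
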